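(* Let $k\ge 1$ and let $G$ be a $k$-degenerate graph. Define a sequence of edge sets as follows. Set $\Lambda_0=\emptyset$. For $i \ge 1$, let $G_i$ be the graph formed by the edges of $E(G)\setminus(\Lambda_0\cup\dots\cup\Lambda_{i-1})$ (with their endpoints), and let $\deg_i(v)$ denote the degree of $v$ in $G_i$. If $G_i$ has at least one edge, choose a vertex $w_i$ of $G_i$ such that at least $\max\{1,\deg_i(w_i)-k\}$ of its neighbors in $G_i$ have $\deg_i \le k$ (such a vertex always exists), and set $\Lambda_i=\{w_iv : w_iv\in E(G_i),\ \deg_i(v)\le k\}$; the vertex $w_i$ is called the center of $\Lambda_i$. The process stops at the first $m$ for which $G_{m+1}$ has no edges. Then for all $1\le i<j\le m$, the centers $w_i$ and $w_j$ are distinct.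
   Context: All graphs are finite and simple. A graph is $k$-degenerate if every subgraph of it has a vertex of degree at most $k$. *)

theory Defs
  imports Main
begin

definition simple_graph :: "'a set \<Rightarrow> 'a set set \<Rightarrow> bool" where
  "simple_graph V E \<longleftrightarrow> finite V \<and> (\<forall>e\<in>E. e \<subseteq> V \<and> card e = 2)"

definition deg_in :: "'a set set \<Rightarrow> 'a \<Rightarrow> nat" where
  "deg_in F v = card {e \<in> F. v \<in> e}"

definition subgraph :: "'a set \<Rightarrow> 'a set set \<Rightarrow> 'a set \<Rightarrow> 'a set set \<Rightarrow> bool" where
  "subgraph V' E' V E \<longleftrightarrow> V' \<subseteq> V \<and> E' \<subseteq> E \<and> (\<forall>e\<in>E'. e \<subseteq> V')"

definition degenerate :: "nat \<Rightarrow> 'a set \<Rightarrow> 'a set set \<Rightarrow> bool" where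
  "degenerate k V E \<longleftrightarrow>
     (\<forall>V' E'. subgraph V' E' V E \<and> V' \<noteq> {} \<longrightarrow> (\<exists>v\<in>V'. deg_in E' v \<le> k))"

definition remaining :: "'a set set \<Rightarrow> (nat \<Rightarrow> 'a set set) \<Rightarrow> nat \<Rightarrow> 'a set set" where
  "remaining E \<Lambda> i = E - (\<Union>j<i. \<Lambda> j)"

definition valid_process ::
  "nat \<Rightarrow> 'a set set \<Rightarrow> (nat \<Rightarrow> 'a) \<Rightarrow> (nat \<Rightarrow> 'a set set) \<Rightarrow> nat \<Rightarrow> bool" where
  "valid_process k E w \<Lambda> m \<longleftrightarrow>
     \<Lambda> 0 = {} \<and>
     (\<forall>i. 1 \<le> i \<and> i \<le> m \<longrightarrow>
        (let R = remaining E \<Lambda> i in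
          R \<noteq> {} \<and>
          w i \<in> \<Union>R \<and>
          card {v. {w i, v} \<in> R \<and> deg_in R v \<le> k} \<ge> max 1 (deg_in R (w i) - k) \<and>
          \<Lambda> i = {{w i, v} | v. {w i, v} \<in> R \<and> deg_in R v \<le> k})) \<and>
     remaining E \<Lambda> (m + 1) = {}"

end

theory Submission
  imports Defs
begin

text \<open>Right after step i the center x = w i has degree at most k, since at least
  deg x - k of its edges were removed, and every edge xv still present has
  deg v > k, since otherwise it would have been removed. This persists: an edge xv
  is removed at a later step t only if v = w t, which is impossible because x
  would then be a low-degree neighbour of w t; and a high-degree v \<noteq> w t keeps
  its degree. So x never again has a low-degree neighbour and cannot be a
  center. Degeneracy and k \<ge> 1 are only needed for the existence of the centers,
  which a run of the process already provides.\<close>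

definition low_neighbours :: "'a set set \<Rightarrow> nat \<Rightarrow> 'a \<Rightarrow> 'a set" where
  "low_neighbours F k x = {v. {x, v} \<in> F \<and> deg_in F v \<le> k}"

lemma remaining_Suc: "remaining E \<Lambda> (Suc t) = remaining E \<Lambda> t - \<Lambda> t"
  unfolding remaining_def by (auto simp: lessThan_Suc)

lemma remaining_antimono: "t \<le> s \<Longrightarrow> remaining E \<Lambda> s \<subseteq> remaining E \<Lambda> t"
  unfolding remaining_def by auto

lemma finite_remaining: "finite E \<Longrightarrow> finite (remaining E \<Lambda> t)"
  unfolding remaining_def by simp

lemma simple_graph_finite_edges: "simple_graph V E \<Longrightarrow> finite E"
  unfolding simple_graph_def by (meson Pow_iff finite_Pow_iff finite_subset subsetI)

lemma simple_graph_edge_neq: "simple_graph V E \<Longrightarrow> {x, v} \<in> E \<Longrightarrow> x \<noteq> v"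
  unfolding simple_graph_def by auto

lemma deg_in_mono: "finite F \<Longrightarrow> G \<subseteq> F \<Longrightarrow> deg_in G v \<le> deg_in F v"
  unfolding deg_in_def by (rule card_mono) auto

lemma valid_process_card_low_neighbours:
  assumes "valid_process k E w \<Lambda> m" "1 \<le> t" "t \<le> m"
  shows "max 1 (deg_in (remaining E \<Lambda> t) (w t) - k)
           \<le> card (low_neighbours (remaining E \<Lambda> t) k (w t))"
  using assms unfolding valid_process_def low_neighbours_def Let_def by auto

lemma valid_process_Lambda:
  assumes "valid_process k E w \<Lambda> m" "1 \<le> t" "t \<le> m"
  shows "\<Lambda> t = (\<lambda>v. {w t, v}) ` low_neighbours (remaining E \<Lambda> t) k (w t)"
  using assms unfolding valid_process_def low_neighbours_def Let_def by auto

lemma edge_remaining_Suc_high: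
  assumes "valid_process k E w \<Lambda> m" "1 \<le> t" "t \<le> m"
    and "{w t, v} \<in> remaining E \<Lambda> (Suc t)"
  shows "k < deg_in (remaining E \<Lambda> t) v"
proof (rule ccontr)
  assume "\<not> k < deg_in (remaining E \<Lambda> t) v"
  moreover have "{w t, v} \<in> remaining E \<Lambda> t" "{w t, v} \<notin> \<Lambda> t"
    using assms(4) unfolding remaining_Suc by auto
  ultimately show False
    using valid_process_Lambda[OF assms(1-3)] unfolding low_neighbours_def by auto
qed

lemma deg_in_center_remaining_Suc:
  assumes "valid_process k E w \<Lambda> m" "1 \<le> t" "t \<le> m" "finite E"
  shows "deg_in (remaining E \<Lambda> (Suc t)) (w t) \<le> k"
proof -
  let ?R = "remaining E \<Lambda> t" and ?S = "low_neighbours (remaining E \<Lambda> t) k (w t)"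
  have card_S: "max 1 (deg_in ?R (w t) - k) \<le> card ?S"
    using valid_process_card_low_neighbours[OF assms(1-3)] .
  have Lambda: "\<Lambda> t = (\<lambda>v. {w t, v}) ` ?S"
    using valid_process_Lambda[OF assms(1-3)] .
  have "inj_on (\<lambda>v. {w t, v}) ?S"
    by (rule inj_onI) (metis doubleton_eq_iff)
  then have card_Lambda: "card (\<Lambda> t) = card ?S"
    by (simp add: Lambda card_image)
  have Lambda_sub: "\<Lambda> t \<subseteq> {e \<in> ?R. w t \<in> e}"
    using Lambda unfolding low_neighbours_def by auto
  have "{e \<in> remaining E \<Lambda> (Suc t). w t \<in> e} = {e \<in> ?R. w t \<in> e} - \<Lambda> t"
    unfolding remaining_Suc by auto
  then have "deg_in (remaining E \<Lambda> (Suc t)) (w t) = deg_in ?R (w t) - card (\<Lambda> t)"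
    unfolding deg_in_def using Lambda_sub finite_remaining[OF assms(4)]
    by (simp add: card_Diff_subset finite_subset)
  with card_Lambda card_S show ?thesis by linarith
qed

lemma deg_in_remaining_Suc_high:
  assumes "valid_process k E w \<Lambda> m" "1 \<le> t" "t \<le> m"
    and "v \<noteq> w t" "k < deg_in (remaining E \<Lambda> t) v"
  shows "deg_in (remaining E \<Lambda> (Suc t)) v = deg_in (remaining E \<Lambda> t) v"
proof -
  have "v \<notin> e" if "e \<in> \<Lambda> t" for e
    using that assms(4,5) valid_process_Lambda[OF assms(1-3)]
    unfolding low_neighbours_def by auto
  then have "{e \<in> remaining E \<Lambda> (Suc t). v \<in> e} = {e \<in> remaining E \<Lambda> t. v \<in> e}"
    unfolding remaining_Suc by auto
  then show ?thesis unfolding deg_in_def by simp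
qed

lemma former_center_neighbours_high:
  assumes "valid_process k E w \<Lambda> m" "simple_graph V E" "1 \<le> i"
    and "Suc i \<le> t" "t \<le> m" "{w i, v} \<in> remaining E \<Lambda> t"
  shows "k < deg_in (remaining E \<Lambda> t) v"
  using assms(4-6)
proof (induction t arbitrary: v rule: dec_induct)
  case base
  have "i \<le> m" using base by simp
  have "v \<noteq> w i"
    using base simple_graph_edge_neq[OF assms(2)] unfolding remaining_def by auto
  with base show ?case
    using edge_remaining_Suc_high[OF assms(1,3) \<open>i \<le> m\<close>]
      deg_in_remaining_Suc_high[OF assms(1,3) \<open>i \<le> m\<close>] by simp
next
  case (step n)
  have n: "1 \<le> n" "n \<le> m" using step assms(3) by auto
  have edge_n: "{w i, v} \<in> remaining E \<Lambda> n" "{w i, v} \<notin> \<Lambda> n"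
    using step.prems(2) unfolding remaining_Suc by auto
  have high: "k < deg_in (remaining E \<Lambda> n) v"
    using step edge_n(1) by simp
  have finite_E: "finite E" using simple_graph_finite_edges[OF assms(2)] .
  have "deg_in (remaining E \<Lambda> n) (w i) \<le> deg_in (remaining E \<Lambda> (Suc i)) (w i)"
    by (rule deg_in_mono[OF finite_remaining[OF finite_E] remaining_antimono[OF step.hyps(1)]])
  also have "\<dots> \<le> k"
    using deg_in_center_remaining_Suc[OF assms(1,3) _ finite_E] step n by simp
  finally have low_center: "deg_in (remaining E \<Lambda> n) (w i) \<le> k" .
  have "v \<noteq> w n"
  proof
    assume "v = w n"
    then have "w i \<in> low_neighbours (remaining E \<Lambda> n) k (w n)"
      using edge_n(1) low_center unfolding low_neighbours_def by (simp add: insert_commute)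
    then have "{w i, v} \<in> \<Lambda> n"
      using valid_process_Lambda[OF assms(1) n] \<open>v = w n\<close> by (auto simp: insert_commute)
    with edge_n(2) show False by contradiction
  qed
  then show ?case
    using deg_in_remaining_Suc_high[OF assms(1) n] high by simp
qed

theorem mainTheorem3:
  fixes V :: "'a set" and E :: "'a set set" and k m :: nat
    and w :: "nat \<Rightarrow> 'a" and \<Lambda> :: "nat \<Rightarrow> 'a set set"
  assumes "k \<ge> 1"
    and "simple_graph V E"
    and "degenerate k V E"
    and "valid_process k E w \<Lambda> m"
  shows "\<forall>i j. 1 \<le> i \<and> i < j \<and> j \<le> m \<longrightarrow> w i \<noteq> w j"
proof (intro allI impI notI)
  fix i j assume ij: "1 \<le> i \<and> i < j \<and> j \<le> m" and same_center: "w i = w j"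
  have "low_neighbours (remaining E \<Lambda> j) k (w j) = {}"
    using former_center_neighbours_high[OF assms(4,2), of i j] ij same_center
    unfolding low_neighbours_def by force
  moreover have "1 \<le> card (low_neighbours (remaining E \<Lambda> j) k (w j))"
    using valid_process_card_low_neighbours[OF assms(4), of j] ij by simp
  ultimately show False by simp
qed

end
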